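(* Consider the preference robust optimization problem $$\text{(PRO)}\qquad \max_{\bm z\in Z}\ \min_{\bm v\in\mathcal V}\ \frac1K\sum_{k=1}^K(\bm R\bm v)^\top\bm g(\bm z^\top\bm\xi^k),$$ i.e. $\max_{\bm z\in Z}\min_{u\in\mathcal U}\mathbb E[u(\bm z^\top\bm\xi)]$ where $\bm\xi$ takes the values $\bm\xi^k$ each with probability $1/K$ and $\mathcal U:=\{u(\cdot)=(\bm R\bm v)^\top\bm g(\cdot):\bm v\in\mathcal V\}$. For variables $\bm z\in Z$, $\bm\lambda\in\mathbb R^{N-1}$, $\bm\eta\in\mathbb R^M$, $\bm y^k\in\mathbb R^{N-1}$, $\bm w^k\in\{0,1\}^{N-1}$ ($k=1,\dots,K$), put $\bm s:=\frac1K\sum_{k=1}^K(\bm P\bm y^k+\bm Q\bm w^k)+\sum_{m=1}^M\eta_m h_m\bm\Delta^m\in\mathbb R^{N-1}$. Then the optimal value of (PRO) equals the optimal value of the mixed-integer linear program $$\max\ \{\bm s\}_{N-1}-\bm\lambda^\top\bm b$$ subject to $\{\bm s\}_{[N-2]}-\{\bm s\}_{N-1}\bm e+\bm A^\top\bm\lambda=\bm 0$; $x_jw^k_j-y^k_j\le0$, $x_{j+1}w^k_j-y^k_j\ge0$, $w^k_j\in\{0,1\}$ for $j=1,\dots,N-1$, $k=1,\dots,K$; $\sum_{j=1}^{N-1}w^k_j=1$ and $\sum_{j=1}^{N-1}y^k_j=\bm z^\top\bm\xi^k$ for $k=1,\dots,K$; $\bm z\in Z$, $\bm\lambda\ge\bm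 0$, $\bm\eta\ge\bm 0$.
   Context: Let $N\ge3$ be an integer and $\underline x=x_1<x_2<\cdots<x_N=\bar x$ real numbers; $\bm e$ denotes the all-ones vector of the appropriate dimension. Define $\bm g:[\underline x,\bar x]\to\mathbb R^{N-1}$ by $\bm g(x_1)=\bm 0$ and, for $x\in(x_i,x_{i+1}]$ ($i\in\{1,\dots,N-1\}$), $\bm g(x)=(1,\dots,1,\frac{x-x_i}{x_{i+1}-x_i},0,\dots,0)$ with the first $i-1$ entries equal to $1$, the $i$-th entry $\frac{x-x_i}{x_{i+1}-x_i}$ and the last $N-1-i$ entries $0$. For $\bm v\in\mathbb R^{N-2}$ let $\bm R\bm v:=(v_1,\dots,v_{N-2},1-\bm e^\top\bm v)\in\mathbb R^{N-1}$. For a vector $\bm a\in\mathbb R^{N-1}$, $\{\bm a\}_{N-1}$ denotes its last component and $\{\bm a\}_{[N-2]}$ the vector of its first $N-2$ components. Let $\bm P\in\mathbb R^{(N-1)\times(N-1)}$ be diagonal with entries $\bm P_{jj}=1/(x_{j+1}-x_j)$, and $\bm Q\in\mathbb R^{(N-1)\times(N-1)}$ upper triangular with $\bm Q_{jj}=-x_j/(x_{j+1}-x_j)$, $\bm Q_{jl}=1$ for $l>j$, and $\bm Q_{jl}=0$ for $l<j$. Let $\bm A\in\mathbb R^{(N-1)\times(N-2)}$ have first row $\bm e^\top$ and, for $j=2,\dots,N-1$, $j$-th row equal to minus the $(j-1)$-th standard unit vector of $\mathbb R^{N-2}$; let $\bm b=(1,0,\dots,0)\in\mathbb R^{N-1}$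 (so $\bm A\bm v\le\bm b$ means $\bm v\ge0$, $\bm e^\top\bm v\le1$). Let $M\ge1$ and, for $m=1,\dots,M$, let $r_1^m\le r_3^m$ and $r_2^m$ lie in $[\underline x,\bar x]$, $p^m\in[0,1]$, $h_m\in\{-1,1\}$, and put $\bm\Delta^m:=(1-p^m)\bm g(r_1^m)+p^m\bm g(r_3^m)-\bm g(r_2^m)$. Let $\mathcal V:=\{\bm v\in\mathbb R^{N-2}:\bm A\bm v\le\bm b,\ h_m(\bm R\bm v)^\top\bm\Delta^m\le0,\ m=1,\dots,M\}$. Let $Z\subset\mathbb R^n$ be compact and convex, and $\bm\xi^1,\dots,\bm\xi^K\in\mathbb R^n$ with $\bm z^\top\bm\xi^k\in[\underline x,\bar x]$ for all $\bm z\in Z$ and all $k$. *)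

theory Defs
  imports "HOL-Analysis.Analysis"
begin

text \<open>Conventions: vectors in R^(N-1) / R^(N-2) / R^M are functions nat => real,
  only the entries with indices 1..N-1 (resp. 1..N-2, 1..M) are meaningful.
  The breakpoints are xs 1 < ... < xs N.\<close>

definition gfun :: "nat \<Rightarrow> (nat \<Rightarrow> real) \<Rightarrow> real \<Rightarrow> nat \<Rightarrow> real" where
  "gfun N xs x j =
     (if x = xs 1 then 0
      else (let i = (THE i. 1 \<le> i \<and> i < N \<and> xs i < x \<and> x \<le> xs (Suc i)) in
            if j < i then 1
            else if j = i then (x - xs i) / (xs (Suc i) - xs i)
            else 0))"

definition Rmap :: "nat \<Rightarrow> (nat \<Rightarrow> real) \<Rightarrow> nat \<Rightarrow> real" where
  "Rmap N v j = (if j \<le> N - 2 then v j else 1 - (\<Sum>l=1..N-2. v l))"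

definition dotN :: "nat \<Rightarrow> (nat \<Rightarrow> real) \<Rightarrow> (nat \<Rightarrow> real) \<Rightarrow> real" where
  "dotN n a c = (\<Sum>j=1..n. a j * c j)"

definition Delta :: "nat \<Rightarrow> (nat \<Rightarrow> real) \<Rightarrow> real \<Rightarrow> real \<Rightarrow> real \<Rightarrow> real \<Rightarrow> nat \<Rightarrow> real" where
  "Delta N xs r1 r2 r3 p j =
     (1 - p) * gfun N xs r1 j + p * gfun N xs r3 j - gfun N xs r2 j"

definition Pmat :: "nat \<Rightarrow> (nat \<Rightarrow> real) \<Rightarrow> nat \<Rightarrow> nat \<Rightarrow> real" where
  "Pmat N xs j l = (if j = l then 1 / (xs (Suc j) - xs j) else 0)"

definition Qmat :: "nat \<Rightarrow> (nat \<Rightarrow> real) \<Rightarrow> nat \<Rightarrow> nat \<Rightarrow> real" where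
  "Qmat N xs j l = (if j = l then - xs j / (xs (Suc j) - xs j) else if l > j then 1 else 0)"

definition Amat :: "nat \<Rightarrow> nat \<Rightarrow> real" where
  "Amat j l = (if j = 1 then 1 else if l = j - 1 then -1 else 0)"

definition bvec :: "nat \<Rightarrow> real" where
  "bvec j = (if j = 1 then 1 else 0)"

definition mulv :: "nat \<Rightarrow> (nat \<Rightarrow> nat \<Rightarrow> real) \<Rightarrow> (nat \<Rightarrow> real) \<Rightarrow> nat \<Rightarrow> real" where
  "mulv n B a j = (\<Sum>l=1..n. B j l * a l)"

definition mulvT :: "nat \<Rightarrow> (nat \<Rightarrow> nat \<Rightarrow> real) \<Rightarrow> (nat \<Rightarrow> real) \<Rightarrow> nat \<Rightarrow> real" where
  "mulvT n B a l = (\<Sum>j=1..n. B j l * a j)"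

definition Vset :: "nat \<Rightarrow> (nat \<Rightarrow> real) \<Rightarrow> nat \<Rightarrow> (nat \<Rightarrow> real) \<Rightarrow> (nat \<Rightarrow> real) \<Rightarrow>
    (nat \<Rightarrow> real) \<Rightarrow> (nat \<Rightarrow> real) \<Rightarrow> (nat \<Rightarrow> real) \<Rightarrow> (nat \<Rightarrow> real) set" where
  "Vset N xs M r1 r2 r3 p h =
     {v. (\<forall>j\<in>{1..N-1}. mulv (N-2) Amat v j \<le> bvec j) \<and>
         (\<forall>m\<in>{1..M}. h m * dotN (N-1) (Rmap N v) (Delta N xs (r1 m) (r2 m) (r3 m) (p m)) \<le> 0)}"

definition PRO_value :: "nat \<Rightarrow> (nat \<Rightarrow> real) \<Rightarrow> nat \<Rightarrow> (nat \<Rightarrow> real) \<Rightarrow> (nat \<Rightarrow> real) \<Rightarrow>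
    (nat \<Rightarrow> real) \<Rightarrow> (nat \<Rightarrow> real) \<Rightarrow> (nat \<Rightarrow> real) \<Rightarrow> 'a::real_inner set \<Rightarrow> nat \<Rightarrow> (nat \<Rightarrow> 'a) \<Rightarrow> ereal" where
  "PRO_value N xs M r1 r2 r3 p h Z K \<xi> =
     (SUP z\<in>Z. INF v\<in>Vset N xs M r1 r2 r3 p h.
        ereal ((1 / real K) * (\<Sum>k=1..K. dotN (N-1) (Rmap N v) (gfun N xs (z \<bullet> \<xi> k)))))"

definition svec :: "nat \<Rightarrow> (nat \<Rightarrow> real) \<Rightarrow> nat \<Rightarrow> (nat \<Rightarrow> real) \<Rightarrow> (nat \<Rightarrow> real) \<Rightarrow>
    (nat \<Rightarrow> real) \<Rightarrow> (nat \<Rightarrow> real) \<Rightarrow> (nat \<Rightarrow> real) \<Rightarrow> nat \<Rightarrow>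
    (nat \<Rightarrow> real) \<Rightarrow> (nat \<Rightarrow> nat \<Rightarrow> real) \<Rightarrow> (nat \<Rightarrow> nat \<Rightarrow> real) \<Rightarrow> nat \<Rightarrow> real" where
  "svec N xs M r1 r2 r3 p h K \<eta> y w j =
     (1 / real K) * (\<Sum>k=1..K. mulv (N-1) (Pmat N xs) (y k) j + mulv (N-1) (Qmat N xs) (w k) j)
     + (\<Sum>m=1..M. \<eta> m * h m * Delta N xs (r1 m) (r2 m) (r3 m) (p m) j)"

definition MILP_feasible :: "nat \<Rightarrow> (nat \<Rightarrow> real) \<Rightarrow> nat \<Rightarrow> (nat \<Rightarrow> real) \<Rightarrow> (nat \<Rightarrow> real) \<Rightarrow>
    (nat \<Rightarrow> real) \<Rightarrow> (nat \<Rightarrow> real) \<Rightarrow> (nat \<Rightarrow> real) \<Rightarrow> 'a::real_inner set \<Rightarrow> nat \<Rightarrow> (nat \<Rightarrow> 'a) \<Rightarrow>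
    ('a \<times> (nat \<Rightarrow> real) \<times> (nat \<Rightarrow> real) \<times> (nat \<Rightarrow> nat \<Rightarrow> real) \<times> (nat \<Rightarrow> nat \<Rightarrow> real)) set" where
  "MILP_feasible N xs M r1 r2 r3 p h Z K \<xi> =
     {(z, lam, \<eta>, y, w).
        (let s = svec N xs M r1 r2 r3 p h K \<eta> y w in
          (\<forall>j\<in>{1..N-2}. s j - s (N-1) + mulvT (N-1) Amat lam j = 0)) \<and>
        (\<forall>k\<in>{1..K}. \<forall>j\<in>{1..N-1}.
            xs j * w k j - y k j \<le> 0 \<and> xs (Suc j) * w k j - y k j \<ge> 0 \<and> w k j \<in> {0, 1}) \<and>
        (\<forall>k\<in>{1..K}. (\<Sum>j=1..N-1. w k j) = 1 \<and> (\<Sum>j=1..N-1. y k j) = z \<bullet> \<xi> k) \<and>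
        z \<in> Z \<and> (\<forall>j\<in>{1..N-1}. lam j \<ge> 0) \<and> (\<forall>m\<in>{1..M}. \<eta> m \<ge> 0)}"

definition MILP_value :: "nat \<Rightarrow> (nat \<Rightarrow> real) \<Rightarrow> nat \<Rightarrow> (nat \<Rightarrow> real) \<Rightarrow> (nat \<Rightarrow> real) \<Rightarrow>
    (nat \<Rightarrow> real) \<Rightarrow> (nat \<Rightarrow> real) \<Rightarrow> (nat \<Rightarrow> real) \<Rightarrow> 'a::real_inner set \<Rightarrow> nat \<Rightarrow> (nat \<Rightarrow> 'a) \<Rightarrow> ereal" where
  "MILP_value N xs M r1 r2 r3 p h Z K \<xi> =
     (SUP (z, lam, \<eta>, y, w)\<in>MILP_feasible N xs M r1 r2 r3 p h Z K \<xi>.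
        ereal (svec N xs M r1 r2 r3 p h K \<eta> y w (N-1) - dotN (N-1) lam bvec))"

end

theory Submission
  imports Defs
begin

(* For fixed z the inner problem of (PRO) is a linear program in v: since
   (R v)^T a = a_(N-1) + sum_l (a_l - a_(N-1)) v_l, both the objective and the constraints of V
   are affine in v. LP duality, obtained from Farkas' lemma (itself proved by Fourier-Motzkin
   elimination), turns the minimum over V into a maximum over multipliers lambda >= 0 of A v <= b
   and eta >= 0 of the preference constraints. The dual is always feasible through the simplex
   rows of A, so there is no duality gap, even when V is empty. In the MILP the expectation
   (1/K) sum_k g(z^T xi^k) is produced linearly as (1/K) sum_k (P y^k + Q w^k): the binary w^k
   selects a segment [x_i, x_(i+1)] containing z^T xi^k and y^k puts z^T xi^k on it. The dual
   constraints and objective are then exactly those of the MILP, and maximising over z on both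
   sides gives the equality. *)

(* A pair (a, b) stands for the linear inequality  sum_j a j * v j <= b. *)
inductive_set derivable :: "(('j \<Rightarrow> real) \<times> real) set \<Rightarrow> (('j \<Rightarrow> real) \<times> real) set"
  for C
where
  base: "c \<in> C \<Longrightarrow> c \<in> derivable C"
| add: "(a, b) \<in> derivable C \<Longrightarrow> (a', b') \<in> derivable C \<Longrightarrow> (\<lambda>j. a j + a' j, b + b') \<in> derivable C"
| scale: "(a, b) \<in> derivable C \<Longrightarrow> 0 \<le> t \<Longrightarrow> (\<lambda>j. t * a j, t * b) \<in> derivable C"

definition solves :: "'j set \<Rightarrow> (('j \<Rightarrow> real) \<times> real) set \<Rightarrow> ('j \<Rightarrow> real) \<Rightarrow> bool" where
  "solves J C v \<longleftrightarrow> (\<forall>(a, b)\<in>C. (\<Sum>j\<in>J. a j * v j) \<le> b)"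

lemma derivable_mono:
  assumes "C' \<subseteq> derivable C" and "c \<in> derivable C'"
  shows "c \<in> derivable C"
  using assms(2,1) by (induction rule: derivable.induct) (auto intro: derivable.intros)

lemma derivable_coefficient_zero:
  assumes "\<forall>(a, b)\<in>C. a x = 0" and "c \<in> derivable C"
  shows "fst c x = 0"
  using assms(2,1) by (induction rule: derivable.induct) auto

lemma exists_between_finite:
  fixes f g :: "'b \<Rightarrow> real"
  assumes "finite A" "finite B" "\<forall>a\<in>A. \<forall>b\<in>B. f a \<le> g b"
  shows "\<exists>t. (\<forall>a\<in>A. f a \<le> t) \<and> (\<forall>b\<in>B. t \<le> g b)"
proof (cases "A = {}")
  case True
  then show ?thesis
    using assms(2) by (intro exI[of _ "if B = {} then 0 else Min (g ` B)"]) auto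
next
  case False
  then show ?thesis
    using assms by (intro exI[of _ "Max (f ` A)"]) (auto simp: Max_le_iff)
qed

definition fourier_motzkin :: "'j \<Rightarrow> (('j \<Rightarrow> real) \<times> real) set \<Rightarrow> (('j \<Rightarrow> real) \<times> real) set" where
  "fourier_motzkin x C = {c\<in>C. fst c x = 0} \<union>
     (\<lambda>((a, b), (a', b')). (\<lambda>j. a x * a' j - a' x * a j, a x * b' - a' x * b)) `
       ({c\<in>C. fst c x > 0} \<times> {c\<in>C. fst c x < 0})"

lemma finite_fourier_motzkin: "finite C \<Longrightarrow> finite (fourier_motzkin x C)"
  unfolding fourier_motzkin_def by auto

lemma fourier_motzkin_eliminates: "\<forall>(a, b)\<in>fourier_motzkin x C. a x = 0"
  unfolding fourier_motzkin_def by (auto simp: algebra_simps)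

lemma fourier_motzkin_derivable: "fourier_motzkin x C \<subseteq> derivable C"
proof
  fix c assume "c \<in> fourier_motzkin x C"
  then consider "c \<in> C"
    | a b a' b' where "(a, b) \<in> C" "a x > 0" "(a', b') \<in> C" "a' x < 0"
        "c = (\<lambda>j. a x * a' j - a' x * a j, a x * b' - a' x * b)"
    unfolding fourier_motzkin_def by auto
  then show "c \<in> derivable C"
  proof cases
    case 2
    then have "(a, b) \<in> derivable C" "(a', b') \<in> derivable C" "0 \<le> a x" "0 \<le> - a' x"
      by (auto intro: derivable.base)
    from derivable.add[OF derivable.scale derivable.scale, OF this(2,3,1,4)] show ?thesis
      unfolding \<open>c = _\<close> by simp
  qed (rule derivable.base)
qed

lemma fourier_motzkin_lift:
  fixes C :: "(('j \<Rightarrow> real) \<times> real) set"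
  assumes "finite J" "x \<notin> J" "finite C" and v: "solves J (fourier_motzkin x C) v"
  shows "\<exists>t. solves (insert x J) C (v(x := t))"
proof -
  define S where "S a = (\<Sum>j\<in>J. a j * v j)" for a :: "'j \<Rightarrow> real"
  let ?bound = "\<lambda>(a, b). (b - S a) / a x"
  let ?Cp = "{c\<in>C. fst c x > 0}" and ?Cn = "{c\<in>C. fst c x < 0}"
  have "?bound c' \<le> ?bound c" if "c \<in> ?Cp" "c' \<in> ?Cn" for c c'
  proof -
    obtain a b a' b' where c: "c = (a, b)" "c' = (a', b')" by fastforce
    with that have "(\<lambda>j. a x * a' j - a' x * a j, a x * b' - a' x * b) \<in> fourier_motzkin x C"
      "a x > 0" "a' x < 0"
      unfolding fourier_motzkin_def by (auto intro!: image_eqI[of _ _ "(c, c')"])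
    then have "a x * S a' - a' x * S a \<le> a x * b' - a' x * b"
      using v unfolding solves_def S_def by (auto simp: algebra_simps sum_subtractf sum_distrib_left)
    with \<open>a x > 0\<close> \<open>a' x < 0\<close> show ?thesis
      unfolding c by (simp add: divide_simps) (simp add: algebra_simps)
  qed
  then obtain t where tn: "\<And>c. c \<in> ?Cn \<Longrightarrow> ?bound c \<le> t" and tp: "\<And>c. c \<in> ?Cp \<Longrightarrow> t \<le> ?bound c"
    using exists_between_finite[of ?Cn ?Cp ?bound ?bound] assms(3) by fastforce
  have "(\<Sum>j\<in>insert x J. a j * (v(x := t)) j) \<le> b" if "(a, b) \<in> C" for a b
  proof -
    have "(\<Sum>j\<in>insert x J. a j * (v(x := t)) j) = a x * t + S a"
      unfolding S_def using assms(1,2) by (auto intro!: sum.cong)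
    moreover consider "a x = 0" | "a x > 0" | "a x < 0" by linarith
    then have "a x * t + S a \<le> b"
    proof cases
      case 1
      then have "(a, b) \<in> fourier_motzkin x C" using that unfolding fourier_motzkin_def by auto
      then show ?thesis using v 1 unfolding solves_def S_def by auto
    next
      case 2
      then show ?thesis using tp[of "(a, b)"] that by (auto simp: field_simps)
    next
      case 3
      then show ?thesis using tn[of "(a, b)"] that by (auto simp: field_simps)
    qed
    ultimately show ?thesis by simp
  qed
  then show ?thesis
    unfolding solves_def by blast
qed

lemma infeasible_imp_derivable_contradiction:
  assumes "finite J" "finite C" "\<not> (\<exists>v. solves J C v)"
  shows "\<exists>a b. (a, b) \<in> derivable C \<and> (\<forall>j\<in>J. a j = 0) \<and> b < 0"
  using assms
proof (induction J arbitrary: C rule: finite_induct)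
  case empty
  then obtain a b where "(a, b) \<in> C" "b < 0"
    unfolding solves_def by force
  then show ?case by (auto intro: derivable.base)
next
  case (insert x J)
  have "\<not> (\<exists>v. solves J (fourier_motzkin x C) v)"
    using fourier_motzkin_lift[OF insert.hyps(1,2) insert.prems(1)] insert.prems(2) by meson
  from insert.IH[OF finite_fourier_motzkin[OF insert.prems(1)] this] obtain a b
    where ab: "(a, b) \<in> derivable (fourier_motzkin x C)" "\<forall>j\<in>J. a j = 0" "b < 0"
    by blast
  have "a x = 0"
    using derivable_coefficient_zero[OF fourier_motzkin_eliminates ab(1)] by simp
  with ab show ?case
    using derivable_mono[OF fourier_motzkin_derivable ab(1)] by auto
qed

lemma derivable_imp_nonneg_combination:
  assumes "c \<in> derivable ((\<lambda>i. (A i, B i)) ` I)" "finite I"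
  shows "\<exists>\<mu>. (\<forall>i\<in>I. 0 \<le> \<mu> i) \<and> (\<forall>j. fst c j = (\<Sum>i\<in>I. \<mu> i * A i j)) \<and>
    snd c = (\<Sum>i\<in>I. \<mu> i * B i)"
  using assms(1)
proof (induction rule: derivable.induct)
  case (base c)
  then obtain i where "i \<in> I" "c = (A i, B i)" by blast
  then show ?case
  proof (intro exI[of _ "\<lambda>k. of_bool (k = i)"] conjI allI ballI)
    have "I \<inter> {k. k = i} = {i}" using \<open>i \<in> I\<close> by auto
    then show "fst c j = (\<Sum>k\<in>I. of_bool (k = i) * A k j)" "snd c = (\<Sum>k\<in>I. of_bool (k = i) * B k)" for j
      using assms(2) \<open>c = (A i, B i)\<close> by simp_all
  qed simp
next
  case (add a b a' b')
  then obtain \<mu> \<mu>' where "\<forall>i\<in>I. 0 \<le> \<mu> i" "\<forall>j. a j = (\<Sum>i\<in>I. \<mu> i * A i j)" "b = (\<Sum>i\<in>I. \<mu> i * B i)"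
    "\<forall>i\<in>I. 0 \<le> \<mu>' i" "\<forall>j. a' j = (\<Sum>i\<in>I. \<mu>' i * A i j)" "b' = (\<Sum>i\<in>I. \<mu>' i * B i)"
    by auto
  then show ?case
    by (intro exI[of _ "\<lambda>i. \<mu> i + \<mu>' i"]) (simp add: algebra_simps sum.distrib)
next
  case (scale a b t)
  then obtain \<mu> where "\<forall>i\<in>I. 0 \<le> \<mu> i" "\<forall>j. a j = (\<Sum>i\<in>I. \<mu> i * A i j)" "b = (\<Sum>i\<in>I. \<mu> i * B i)"
    by auto
  then show ?case
    using \<open>0 \<le> t\<close> by (intro exI[of _ "\<lambda>i. t * \<mu> i"]) (simp add: sum_distrib_left mult.assoc)
qed

theorem farkas:
  fixes A :: "'i \<Rightarrow> 'j \<Rightarrow> real"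
  assumes "finite J" "finite I" "\<not> (\<exists>v. \<forall>i\<in>I. (\<Sum>j\<in>J. A i j * v j) \<le> B i)"
  shows "\<exists>\<mu>. (\<forall>i\<in>I. 0 \<le> \<mu> i) \<and> (\<forall>j\<in>J. (\<Sum>i\<in>I. \<mu> i * A i j) = 0) \<and> (\<Sum>i\<in>I. \<mu> i * B i) < 0"
proof -
  have "\<not> (\<exists>v. solves J ((\<lambda>i. (A i, B i)) ` I) v)"
    using assms(3) unfolding solves_def by auto
  then obtain a b where ab: "(a, b) \<in> derivable ((\<lambda>i. (A i, B i)) ` I)" "\<forall>j\<in>J. a j = 0" "b < 0"
    using infeasible_imp_derivable_contradiction[OF assms(1)] assms(2) by blast
  obtain \<mu> where "\<forall>i\<in>I. 0 \<le> \<mu> i" "\<forall>j. a j = (\<Sum>i\<in>I. \<mu> i * A i j)" "b = (\<Sum>i\<in>I. \<mu> i * B i)"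
    using derivable_imp_nonneg_combination[OF ab(1) assms(2)] by auto
  with ab show ?thesis by auto
qed

definition primal_feasible :: "'j set \<Rightarrow> 'i set \<Rightarrow> ('i \<Rightarrow> 'j \<Rightarrow> real) \<Rightarrow> ('i \<Rightarrow> real) \<Rightarrow> ('j \<Rightarrow> real) set"
  where "primal_feasible J I A B = {v. \<forall>i\<in>I. (\<Sum>j\<in>J. A i j * v j) \<le> B i}"

definition dual_feasible :: "'j set \<Rightarrow> 'i set \<Rightarrow> ('i \<Rightarrow> 'j \<Rightarrow> real) \<Rightarrow> ('j \<Rightarrow> real) \<Rightarrow> ('i \<Rightarrow> real) set"
  where "dual_feasible J I A d = {\<mu>. (\<forall>i\<in>I. 0 \<le> \<mu> i) \<and> (\<forall>j\<in>J. d j + (\<Sum>i\<in>I. \<mu> i * A i j) = 0)}"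

lemma weak_duality:
  assumes "v \<in> primal_feasible J I A B" "\<mu> \<in> dual_feasible J I A d"
  shows "- (\<Sum>i\<in>I. \<mu> i * B i) \<le> (\<Sum>j\<in>J. d j * v j)"
proof -
  have "(\<Sum>j\<in>J. d j * v j) = (\<Sum>j\<in>J. - (\<Sum>i\<in>I. \<mu> i * A i j) * v j)"
  proof (rule sum.cong)
    show "d j * v j = - (\<Sum>i\<in>I. \<mu> i * A i j) * v j" if "j \<in> J" for j
      using assms(2) that unfolding dual_feasible_def by (simp add: eq_neg_iff_add_eq_0 flip: distrib_right)
  qed simp
  also have "\<dots> = - (\<Sum>i\<in>I. \<mu> i * (\<Sum>j\<in>J. A i j * v j))"
    by (simp add: sum_distrib_left sum_distrib_right sum_negf mult.assoc) (rule sum.swap)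
  also have "\<dots> \<ge> - (\<Sum>i\<in>I. \<mu> i * B i)"
    using assms unfolding primal_feasible_def dual_feasible_def
    by (simp add: sum_mono mult_left_mono)
  finally show ?thesis .
qed

lemma dual_unbounded_along_ray:
  assumes "\<mu>\<^sub>0 \<in> dual_feasible J I A d"
    and "\<forall>i\<in>I. 0 \<le> y i" "\<forall>j\<in>J. (\<Sum>i\<in>I. y i * A i j) = 0" "(\<Sum>i\<in>I. y i * B i) < 0"
  shows "\<exists>\<mu>\<in>dual_feasible J I A d. t < - (\<Sum>i\<in>I. \<mu> i * B i)"
proof
  define \<delta> where "\<delta> = - (\<Sum>i\<in>I. y i * B i)"
  define R where "R = max 0 ((t + (\<Sum>i\<in>I. \<mu>\<^sub>0 i * B i)) / \<delta>) + 1"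
  have "\<delta> > 0" using assms(4) unfolding \<delta>_def by simp
  then have R: "0 \<le> R" "t + (\<Sum>i\<in>I. \<mu>\<^sub>0 i * B i) < R * \<delta>"
    unfolding R_def by (auto simp: field_simps max_def)
  let ?\<mu> = "\<lambda>i. \<mu>\<^sub>0 i + R * y i"
  have sum_\<mu>: "(\<Sum>i\<in>I. ?\<mu> i * f i) = (\<Sum>i\<in>I. \<mu>\<^sub>0 i * f i) + R * (\<Sum>i\<in>I. y i * f i)" for f
    by (simp add: algebra_simps sum.distrib sum_distrib_left)
  show "?\<mu> \<in> dual_feasible J I A d"
    using assms(1-3) R(1) unfolding dual_feasible_def mem_Collect_eq sum_\<mu> by auto
  show "t < - (\<Sum>i\<in>I. ?\<mu> i * B i)"
    using R(2) unfolding sum_\<mu> \<delta>_def by (simp add: algebra_simps)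
qed

lemma strong_duality:
  assumes "finite J" "finite I" "\<mu>\<^sub>0 \<in> dual_feasible J I A d"
    and "\<And>v. v \<in> primal_feasible J I A B \<Longrightarrow> t < (\<Sum>j\<in>J. d j * v j)"
  shows "\<exists>\<mu>\<in>dual_feasible J I A d. t < - (\<Sum>i\<in>I. \<mu> i * B i)"
proof -
  \<comment> \<open>Farkas for the primal system extended by the row  d v <= t  (index None). A positive
    multiplier of that row, after normalisation, gives a dual solution, a zero one gives a dual ray.\<close>
  have "\<not> (\<exists>v. \<forall>q\<in>insert None (Some ` I). (\<Sum>j\<in>J. case_option d A q j * v j) \<le> case_option t B q)"
    using assms(4) unfolding primal_feasible_def by force
  from farkas[OF assms(1) _ this] obtain \<nu> where
    "\<forall>q\<in>insert None (Some ` I). 0 \<le> \<nu> q"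
    "\<forall>j\<in>J. (\<Sum>q\<in>insert None (Some ` I). \<nu> q * case_option d A q j) = 0"
    "(\<Sum>q\<in>insert None (Some ` I). \<nu> q * case_option t B q) < 0"
    using assms(2) by blast
  then have \<theta>: "0 \<le> \<nu> None" and y: "\<forall>i\<in>I. 0 \<le> \<nu> (Some i)"
    and y_eq: "\<forall>j\<in>J. \<nu> None * d j + (\<Sum>i\<in>I. \<nu> (Some i) * A i j) = 0"
    and y_neg: "\<nu> None * t + (\<Sum>i\<in>I. \<nu> (Some i) * B i) < 0"
    by (simp_all add: sum.reindex assms(2))
  show ?thesis
  proof (cases "\<nu> None = 0")
    case False
    with \<theta> have "\<nu> None > 0" by simp
    let ?\<mu> = "\<lambda>i. \<nu> (Some i) / \<nu> None"
    have sum_\<mu>: "(\<Sum>i\<in>I. ?\<mu> i * f i) = (\<Sum>i\<in>I. \<nu> (Some i) * f i) / \<nu> None" for f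
      by (simp add: sum_divide_distrib)
    show ?thesis
    proof
      show "?\<mu> \<in> dual_feasible J I A d"
        using y y_eq \<open>\<nu> None > 0\<close> unfolding dual_feasible_def mem_Collect_eq sum_\<mu>
        by (auto simp: field_simps)
      show "t < - (\<Sum>i\<in>I. ?\<mu> i * B i)"
        using y_neg \<open>\<nu> None > 0\<close> unfolding sum_\<mu> by (simp add: field_simps)
    qed
  next
    case True
    with y y_eq y_neg show ?thesis
      by (intro dual_unbounded_along_ray[OF assms(3), of "\<lambda>i. \<nu> (Some i)"]) auto
  qed
qed

theorem lp_duality:
  assumes "finite J" "finite I" "dual_feasible J I A d \<noteq> {}"
  shows "(INF v\<in>primal_feasible J I A B. ereal (c + (\<Sum>j\<in>J. d j * v j)))
       = (SUP \<mu>\<in>dual_feasible J I A d. ereal (c - (\<Sum>i\<in>I. \<mu> i * B i)))"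
    (is "?primal = ?dual")
proof (rule antisym)
  show "?dual \<le> ?primal"
  proof (intro SUP_least INF_greatest)
    fix \<mu> v assume "\<mu> \<in> dual_feasible J I A d" "v \<in> primal_feasible J I A B"
    then show "ereal (c - (\<Sum>i\<in>I. \<mu> i * B i)) \<le> ereal (c + (\<Sum>j\<in>J. d j * v j))"
      using weak_duality by fastforce
  qed
  show "?primal \<le> ?dual"
  proof (rule ccontr)
    assume "\<not> ?primal \<le> ?dual"
    then obtain t where t: "?dual < ereal t" "ereal t < ?primal"
      using ereal_dense2 by (meson not_le)
    have "t - c < (\<Sum>j\<in>J. d j * v j)" if "v \<in> primal_feasible J I A B" for v
    proof -
      have "ereal t < ereal (c + (\<Sum>j\<in>J. d j * v j))"
        using t(2) INF_lower[OF that] by (rule less_le_trans)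
      then show ?thesis by simp
    qed
    then obtain \<mu> where "\<mu> \<in> dual_feasible J I A d" "t - c < - (\<Sum>i\<in>I. \<mu> i * B i)"
      using strong_duality[OF assms(1,2)] assms(3) by blast
    then have "ereal t < ?dual"
      by (intro less_SUP_iff[THEN iffD2] bexI[of _ \<mu>]) auto
    with t(1) show False by simp
  qed
qed

lemma sum_unit_vector:
  fixes f u :: "'a \<Rightarrow> real"
  assumes "finite S" "i \<in> S" "\<forall>l\<in>S. u l = of_bool (l = i) * c"
  shows "(\<Sum>l\<in>S. f l * u l) = f i * c"
proof -
  have "(\<Sum>l\<in>S. f l * u l) = (\<Sum>l\<in>S. if l = i then f i * c else 0)"
    using assms(3) by (intro sum.cong) auto
  with assms(1,2) show ?thesis by simp
qed

locale breakpoints =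
  fixes N :: nat and xs :: "nat \<Rightarrow> real"
  assumes xs_less: "\<And>i. 1 \<le> i \<Longrightarrow> i < N \<Longrightarrow> xs i < xs (Suc i)"
begin

lemma breakpoints_less: "1 \<le> i \<Longrightarrow> i < k \<Longrightarrow> k \<le> N \<Longrightarrow> xs i < xs k"
proof (induction k)
  case (Suc k)
  then show ?case
    using xs_less[of k] by (cases "i = k") (auto simp: less_Suc_eq)
qed simp

lemma breakpoints_le: "1 \<le> i \<Longrightarrow> i \<le> k \<Longrightarrow> k \<le> N \<Longrightarrow> xs i \<le> xs k"
  using breakpoints_less[of i k] by (cases "i = k") auto

lemma segment_unique:
  assumes "1 \<le> a" "a < N" "xs a < t" "t \<le> xs (Suc a)"
    and "1 \<le> b" "b < N" "xs b < t" "t \<le> xs (Suc b)"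
  shows "a = b"
  using breakpoints_le[of "Suc a" b] breakpoints_le[of "Suc b" a] assms
  by (cases a b rule: linorder_cases) auto

lemma gfun_on_segment:
  assumes i: "1 \<le> i" "i < N" and t: "xs i \<le> t" "t \<le> xs (Suc i)" and "1 \<le> j"
  shows "gfun N xs t j = (if j < i then 1 else if j = i then (t - xs i) / (xs (Suc i) - xs i) else 0)"
proof -
  let ?seg = "\<lambda>i. 1 \<le> i \<and> i < N \<and> xs i < t \<and> t \<le> xs (Suc i)"
  consider "t = xs 1" | "t \<noteq> xs 1" "xs i < t" | "t \<noteq> xs 1" "t = xs i"
    using t by linarith
  then show ?thesis
  proof cases
    case 1
    then have "i = 1"
      using breakpoints_less[of 1 i] i t by (cases "i = 1") auto
    with 1 \<open>1 \<le> j\<close> show ?thesis unfolding gfun_def by auto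
  next
    case 2
    then have "(THE i. ?seg i) = i"
      using i t segment_unique by (intro the_equality) blast+
    with 2 show ?thesis unfolding gfun_def Let_def by simp
  next
    case 3
    then have "i \<noteq> 1" by auto
    then have "xs (i - 1) < xs i" "Suc (i - 1) = i"
      using xs_less[of "i - 1"] i by auto
    then have "(THE i. ?seg i) = i - 1"
      using i 3 \<open>i \<noteq> 1\<close> segment_unique by (intro the_equality) auto
    with 3 \<open>Suc (i - 1) = i\<close> \<open>xs (i - 1) < xs i\<close> show ?thesis
      unfolding gfun_def Let_def by auto
  qed
qed

lemma segment_exists:
  assumes "N \<ge> 2" and "xs 1 \<le> t" "t \<le> xs N"
  obtains i where "1 \<le> i" "i < N" "xs i \<le> t" "t \<le> xs (Suc i)"
proof -
  define S where "S = {i\<in>{1..N-1}. xs i \<le> t}"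
  have "finite S" "1 \<in> S"
    using assms unfolding S_def by auto
  then have "Max S \<in> S" and Max_ge: "\<And>k. k \<in> S \<Longrightarrow> k \<le> Max S"
    using Max_in by auto
  moreover have "t \<le> xs (Suc (Max S))"
  proof (cases "Suc (Max S) = N")
    case False
    then have "Suc (Max S) \<in> {1..N-1}"
      using \<open>Max S \<in> S\<close> unfolding S_def by auto
    moreover have "Suc (Max S) \<notin> S"
      using Max_ge by fastforce
    ultimately show ?thesis
      unfolding S_def by auto
  qed (use assms(3) in simp)
  ultimately show ?thesis
    using that unfolding S_def by auto
qed

definition segment_encoding :: "(nat \<Rightarrow> real) \<Rightarrow> (nat \<Rightarrow> real) \<Rightarrow> real \<Rightarrow> bool" where
  "segment_encoding y w t \<longleftrightarrow>
     (\<forall>j\<in>{1..N-1}. xs j * w j - y j \<le> 0 \<and> xs (Suc j) * w j - y j \<ge> 0 \<and> w j \<in> {0, 1}) \<and>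
     (\<Sum>j=1..N-1. w j) = 1 \<and> (\<Sum>j=1..N-1. y j) = t"

lemma segment_encoding_unit_vector:
  assumes "segment_encoding y w t"
  obtains i where "1 \<le> i" "i < N" "xs i \<le> t" "t \<le> xs (Suc i)"
    "\<forall>l\<in>{1..N-1}. w l = of_bool (l = i) \<and> y l = of_bool (l = i) * t"
proof -
  let ?S = "{1..N-1}"
  have w01: "\<forall>j\<in>?S. w j \<in> {0, 1}" and "sum w ?S = 1" "sum y ?S = t"
    and y_bounds: "\<forall>j\<in>?S. xs j * w j \<le> y j \<and> y j \<le> xs (Suc j) * w j"
    using assms unfolding segment_encoding_def by auto
  have "\<exists>i\<in>?S. w i = 1"
  proof (rule ccontr)
    assume "\<not> (\<exists>i\<in>?S. w i = 1)"
    then have "sum w ?S = 0" using w01 by (intro sum.neutral) auto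
    with \<open>sum w ?S = 1\<close> show False by simp
  qed
  then obtain i where "i \<in> ?S" "w i = 1" ..
  then have "sum w (?S - {i}) = 0"
    using \<open>sum w ?S = 1\<close> by (simp add: sum.remove)
  then have w: "\<forall>l\<in>?S. w l = of_bool (l = i)"
    using w01 \<open>w i = 1\<close> sum_nonneg_eq_0_iff[of "?S - {i}" w] by fastforce
  have y0: "\<forall>l\<in>?S - {i}. y l = 0"
  proof
    fix l assume "l \<in> ?S - {i}"
    then have "w l = 0"
      using w by simp
    with y_bounds \<open>l \<in> ?S - {i}\<close> show "y l = 0"
      by (metis DiffD1 antisym mult_zero_right)
  qed
  then have "y i = t"
    using \<open>sum y ?S = t\<close> \<open>i \<in> ?S\<close> by (simp add: sum.remove)
  then show ?thesis
    using that[of i] \<open>i \<in> ?S\<close> \<open>w i = 1\<close> w y0 y_bounds by fastforce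
qed

lemma segment_encoding_gfun:
  assumes "segment_encoding y w t" "j \<in> {1..N-1}"
  shows "mulv (N-1) (Pmat N xs) y j + mulv (N-1) (Qmat N xs) w j = gfun N xs t j"
proof -
  obtain i where i: "1 \<le> i" "i < N" "xs i \<le> t" "t \<le> xs (Suc i)"
    and yw: "\<forall>l\<in>{1..N-1}. w l = of_bool (l = i) \<and> y l = of_bool (l = i) * t"
    using segment_encoding_unit_vector[OF assms(1)] by blast
  have "i \<in> {1..N-1}" using i by auto
  then have "mulv (N-1) (Pmat N xs) y j + mulv (N-1) (Qmat N xs) w j = Pmat N xs j i * t + Qmat N xs j i"
    unfolding mulv_def using sum_unit_vector[of "{1..N-1}" i y t] sum_unit_vector[of "{1..N-1}" i w 1] yw
    by simp
  also have "\<dots> = gfun N xs t j"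
    using gfun_on_segment[OF i] assms(2) unfolding Pmat_def Qmat_def by (auto simp: diff_divide_distrib)
  finally show ?thesis .
qed

lemma segment_encodings_exist:
  assumes "N \<ge> 2" and "\<And>k. k \<in> I \<Longrightarrow> t k \<in> {xs 1..xs N}"
  obtains y w where "\<forall>k\<in>I. segment_encoding (y k) (w k) (t k)"
proof -
  have "\<forall>k\<in>I. \<exists>yw. segment_encoding (fst yw) (snd yw) (t k)"
  proof
    fix k assume "k \<in> I"
    then obtain i where "1 \<le> i" "i < N" "xs i \<le> t k" "t k \<le> xs (Suc i)"
      using segment_exists[OF assms(1)] assms(2) by (metis atLeastAtMost_iff)
    then have "segment_encoding (\<lambda>j. of_bool (j = i) * t k) (\<lambda>j. of_bool (j = i)) (t k)"
      unfolding segment_encoding_def by auto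
    then show "\<exists>yw. segment_encoding (fst yw) (snd yw) (t k)"
      by (intro exI[of _ "(_, _)"]) simp
  qed
  from bchoice[OF this] obtain yw where "\<forall>k\<in>I. segment_encoding (fst (yw k)) (snd (yw k)) (t k)"
    by blast
  then show ?thesis
    by (intro that[of "\<lambda>k. fst (yw k)" "\<lambda>k. snd (yw k)"])
qed

end

lemma ball_Plus_iff: "(\<forall>x\<in>A <+> B. P x) \<longleftrightarrow> (\<forall>a\<in>A. P (Inl a)) \<and> (\<forall>b\<in>B. P (Inr b))"
  by auto

lemma dotN_Rmap:
  assumes "N \<ge> 3"
  shows "dotN (N-1) (Rmap N v) D = D (N-1) + (\<Sum>l=1..N-2. (D l - D (N-1)) * v l)"
proof -
  have split: "{1..N-1} = insert (N-1) {1..N-2}"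
    using assms by auto
  have "dotN (N-1) (Rmap N v) D = Rmap N v (N-1) * D (N-1) + (\<Sum>l=1..N-2. Rmap N v l * D l)"
    unfolding dotN_def split by (subst sum.insert) auto
  also have "Rmap N v (N-1) = 1 - (\<Sum>l=1..N-2. v l)"
    using assms by (simp add: Rmap_def)
  also have "(\<Sum>l=1..N-2. Rmap N v l * D l) = (\<Sum>l=1..N-2. v l * D l)"
    by (rule sum.cong) (auto simp: Rmap_def)
  finally have "dotN (N-1) (Rmap N v) D = (1 - (\<Sum>l=1..N-2. v l)) * D (N-1) + (\<Sum>l=1..N-2. v l * D l)" .
  then show ?thesis
    by (simp add: algebra_simps sum_subtractf sum_distrib_left sum_distrib_right)
qed

lemma dotN_scaled_sum: "dotN n a (\<lambda>j. c * (\<Sum>k\<in>K. f k j)) = c * (\<Sum>k\<in>K. dotN n a (f k))"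
  unfolding dotN_def by (simp add: sum_distrib_left mult_ac) (rule sum.swap)

locale pro_instance = breakpoints +
  fixes M :: nat and r1 r2 r3 p h :: "nat \<Rightarrow> real"
  assumes N_ge_3: "3 \<le> N"
begin

definition Delta_m :: "nat \<Rightarrow> nat \<Rightarrow> real" where
  "Delta_m m = Delta N xs (r1 m) (r2 m) (r3 m) (p m)"

abbreviation V_index :: "(nat + nat) set" where
  "V_index \<equiv> {1..N-1} <+> {1..M}"

(* The constraints of V as a system in v with rows Inl i (the rows of A) and Inr m (the
   preference constraints, made affine by dotN_Rmap). *)
definition V_row :: "nat + nat \<Rightarrow> nat \<Rightarrow> real" where
  "V_row = case_sum Amat (\<lambda>m l. h m * (Delta_m m l - Delta_m m (N-1)))"

definition V_rhs :: "nat + nat \<Rightarrow> real" where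
  "V_rhs = case_sum bvec (\<lambda>m. - (h m * Delta_m m (N-1)))"

definition expected_g :: "nat \<Rightarrow> (nat \<Rightarrow> 'a::real_inner) \<Rightarrow> 'a \<Rightarrow> nat \<Rightarrow> real" where
  "expected_g K \<xi> z j = (1 / real K) * (\<Sum>k=1..K. gfun N xs (z \<bullet> \<xi> k) j)"

definition dual_value :: "nat \<Rightarrow> (nat \<Rightarrow> 'a::real_inner) \<Rightarrow> 'a \<Rightarrow> ereal" where
  "dual_value K \<xi> z =
     (SUP \<mu>\<in>dual_feasible {1..N-2} V_index V_row (\<lambda>l. expected_g K \<xi> z l - expected_g K \<xi> z (N-1)).
        ereal (expected_g K \<xi> z (N-1) - (\<Sum>i\<in>V_index. \<mu> i * V_rhs i)))"

lemma Vset_eq_primal_feasible: "Vset N xs M r1 r2 r3 p h = primal_feasible {1..N-2} V_index V_row V_rhs"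
proof -
  have "h m * dotN (N-1) (Rmap N v) (Delta_m m) \<le> 0 \<longleftrightarrow>
      (\<Sum>l=1..N-2. h m * (Delta_m m l - Delta_m m (N-1)) * v l) \<le> - (h m * Delta_m m (N-1))" for m v
    unfolding dotN_Rmap[OF N_ge_3] by (simp add: algebra_simps sum_distrib_left) arith
  then show ?thesis
    unfolding Vset_def primal_feasible_def ball_Plus_iff V_row_def V_rhs_def mulv_def Delta_m_def
    by simp
qed

lemma PRO_objective_eq:
  "(1 / real K) * (\<Sum>k=1..K. dotN (N-1) (Rmap N v) (gfun N xs (z \<bullet> \<xi> k)))
     = expected_g K \<xi> z (N-1) + (\<Sum>l=1..N-2. (expected_g K \<xi> z l - expected_g K \<xi> z (N-1)) * v l)"
  unfolding expected_g_def dotN_scaled_sum[symmetric] by (rule dotN_Rmap[OF N_ge_3])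

lemma dual_feasible_nonempty: "dual_feasible {1..N-2} V_index V_row d \<noteq> {}"
proof -
  define L where "L = (\<Sum>l=1..N-2. \<bar>d l\<bar>)"
  define lam where "lam i = (if i = 1 then L else L + d (i - 1))" for i
  have "0 \<le> lam i" if "i \<in> {1..N-1}" for i
  proof (cases "i = 1")
    case True
    then show ?thesis unfolding lam_def L_def by (simp add: sum_nonneg)
  next
    case False
    then have "\<bar>d (i - 1)\<bar> \<le> L"
      unfolding L_def using that by (intro member_le_sum) auto
    with False show ?thesis unfolding lam_def by auto
  qed
  moreover have "d l + (\<Sum>i=1..N-1. lam i * Amat i l) = 0" if "l \<in> {1..N-2}" for l
  proof -
    have "{1..N-1} = insert 1 {2..N-1}" using N_ge_3 by auto
    moreover have "(\<Sum>i=2..N-1. lam i * Amat i l) = (\<Sum>i=2..N-1. if i = Suc l then - lam i else 0)"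
      by (rule sum.cong) (auto simp: Amat_def)
    moreover have "\<dots> = - lam (Suc l)"
      using that N_ge_3 by auto
    ultimately show ?thesis
      using that unfolding lam_def by (simp add: Amat_def)
  qed
  ultimately have "case_sum lam (\<lambda>_. 0) \<in> dual_feasible {1..N-2} V_index V_row d"
    unfolding dual_feasible_def V_row_def by (simp add: sum.Plus ball_Plus_iff comp_def)
  then show ?thesis by blast
qed

lemma PRO_value_eq_dual: "PRO_value N xs M r1 r2 r3 p h Z K \<xi> = (SUP z\<in>Z. dual_value K \<xi> z)"
  unfolding PRO_value_def dual_value_def Vset_eq_primal_feasible PRO_objective_eq
  by (intro SUP_cong refl lp_duality dual_feasible_nonempty) auto

lemma svec_eq_expected_g:
  assumes "\<forall>k\<in>{1..K}. segment_encoding (y k) (w k) (z \<bullet> \<xi> k)" "j \<in> {1..N-1}"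
  shows "svec N xs M r1 r2 r3 p h K \<eta> y w j = expected_g K \<xi> z j + (\<Sum>m=1..M. \<eta> m * h m * Delta_m m j)"
proof -
  have "(\<Sum>k=1..K. mulv (N-1) (Pmat N xs) (y k) j + mulv (N-1) (Qmat N xs) (w k) j)
      = (\<Sum>k=1..K. gfun N xs (z \<bullet> \<xi> k) j)"
    using assms segment_encoding_gfun by (intro sum.cong) auto
  then show ?thesis
    unfolding svec_def expected_g_def Delta_m_def by simp
qed

lemma MILP_feasible_iff:
  "(z, lam, \<eta>, y, w) \<in> MILP_feasible N xs M r1 r2 r3 p h Z K \<xi> \<longleftrightarrow>
     z \<in> Z \<and> (\<forall>k\<in>{1..K}. segment_encoding (y k) (w k) (z \<bullet> \<xi> k)) \<and>
     case_sum lam \<eta> \<in> dual_feasible {1..N-2} V_index V_row (\<lambda>l. expected_g K \<xi> z l - expected_g K \<xi> z (N-1))"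
proof -
  let ?s = "svec N xs M r1 r2 r3 p h K \<eta> y w"
  have constraint_eq: "?s j - ?s (N-1) + mulvT (N-1) Amat lam j
      = expected_g K \<xi> z j - expected_g K \<xi> z (N-1) + (\<Sum>i\<in>V_index. case_sum lam \<eta> i * V_row i j)"
    if "\<forall>k\<in>{1..K}. segment_encoding (y k) (w k) (z \<bullet> \<xi> k)" "j \<in> {1..N-2}" for j
  proof -
    have "?s j = expected_g K \<xi> z j + (\<Sum>m=1..M. \<eta> m * h m * Delta_m m j)"
      "?s (N-1) = expected_g K \<xi> z (N-1) + (\<Sum>m=1..M. \<eta> m * h m * Delta_m m (N-1))"
      using N_ge_3 that(2) svec_eq_expected_g[OF that(1)] by auto
    then show ?thesis
      by (simp add: V_row_def mulvT_def sum.Plus algebra_simps sum_distrib_left sum_subtractf)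
  qed
  have "(z, lam, \<eta>, y, w) \<in> MILP_feasible N xs M r1 r2 r3 p h Z K \<xi> \<longleftrightarrow>
      (\<forall>j\<in>{1..N-2}. ?s j - ?s (N-1) + mulvT (N-1) Amat lam j = 0) \<and>
      (\<forall>k\<in>{1..K}. segment_encoding (y k) (w k) (z \<bullet> \<xi> k)) \<and>
      z \<in> Z \<and> (\<forall>j\<in>{1..N-1}. 0 \<le> lam j) \<and> (\<forall>m\<in>{1..M}. 0 \<le> \<eta> m)"
    unfolding MILP_feasible_def segment_encoding_def Let_def by auto
  with constraint_eq show ?thesis
    unfolding dual_feasible_def by (auto simp: ball_Plus_iff)
qed

lemma MILP_objective_eq:
  assumes "\<forall>k\<in>{1..K}. segment_encoding (y k) (w k) (z \<bullet> \<xi> k)"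
  shows "svec N xs M r1 r2 r3 p h K \<eta> y w (N-1) - dotN (N-1) lam bvec
      = expected_g K \<xi> z (N-1) - (\<Sum>i\<in>V_index. case_sum lam \<eta> i * V_rhs i)"
  using N_ge_3 svec_eq_expected_g[OF assms, of "N-1"]
  by (simp add: V_rhs_def dotN_def sum.Plus sum_negf mult.assoc)

lemma dual_value_le_MILP_value:
  assumes "z \<in> Z" and "\<And>k. k \<in> {1..K} \<Longrightarrow> z \<bullet> \<xi> k \<in> {xs 1..xs N}"
  shows "dual_value K \<xi> z \<le> MILP_value N xs M r1 r2 r3 p h Z K \<xi>"
  unfolding dual_value_def
proof (rule SUP_least)
  fix \<mu>
  assume "\<mu> \<in> dual_feasible {1..N-2} V_index V_row (\<lambda>l. expected_g K \<xi> z l - expected_g K \<xi> z (N-1))"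
  moreover obtain y w where enc: "\<forall>k\<in>{1..K}. segment_encoding (y k) (w k) (z \<bullet> \<xi> k)"
    using segment_encodings_exist[of "{1..K}" "\<lambda>k. z \<bullet> \<xi> k"] N_ge_3 assms(2) by auto
  ultimately have q: "(z, \<lambda>i. \<mu> (Inl i), \<lambda>m. \<mu> (Inr m), y, w) \<in> MILP_feasible N xs M r1 r2 r3 p h Z K \<xi>"
    unfolding MILP_feasible_iff surjective_sum using assms(1) by simp
  show "ereal (expected_g K \<xi> z (N-1) - (\<Sum>i\<in>V_index. \<mu> i * V_rhs i)) \<le> MILP_value N xs M r1 r2 r3 p h Z K \<xi>"
    unfolding MILP_value_def
    by (rule SUP_upper2[OF q])
      (use MILP_objective_eq[OF enc, of "\<lambda>m. \<mu> (Inr m)" "\<lambda>i. \<mu> (Inl i)"] in \<open>simp add: surjective_sum\<close>)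
qed

lemma MILP_value_eq_dual:
  assumes "\<And>z k. z \<in> Z \<Longrightarrow> k \<in> {1..K} \<Longrightarrow> z \<bullet> \<xi> k \<in> {xs 1..xs N}"
  shows "MILP_value N xs M r1 r2 r3 p h Z K \<xi> = (SUP z\<in>Z. dual_value K \<xi> z)"
proof (rule antisym)
  show "MILP_value N xs M r1 r2 r3 p h Z K \<xi> \<le> (SUP z\<in>Z. dual_value K \<xi> z)"
    unfolding MILP_value_def
  proof (rule SUP_least, clarify)
    fix z lam \<eta> y w
    assume "(z, lam, \<eta>, y, w) \<in> MILP_feasible N xs M r1 r2 r3 p h Z K \<xi>"
    then have "z \<in> Z" and enc: "\<forall>k\<in>{1..K}. segment_encoding (y k) (w k) (z \<bullet> \<xi> k)"
      and dual: "case_sum lam \<eta> \<in> dual_feasible {1..N-2} V_index V_row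
          (\<lambda>l. expected_g K \<xi> z l - expected_g K \<xi> z (N-1))"
      unfolding MILP_feasible_iff by auto
    from dual have "ereal (svec N xs M r1 r2 r3 p h K \<eta> y w (N-1) - dotN (N-1) lam bvec) \<le> dual_value K \<xi> z"
      unfolding MILP_objective_eq[OF enc] dual_value_def by (rule SUP_upper2) simp
    also have "\<dots> \<le> (SUP z\<in>Z. dual_value K \<xi> z)"
      using \<open>z \<in> Z\<close> by (rule SUP_upper)
    finally show "ereal (svec N xs M r1 r2 r3 p h K \<eta> y w (N-1) - dotN (N-1) lam bvec)
        \<le> (SUP z\<in>Z. dual_value K \<xi> z)" .
  qed
  show "(SUP z\<in>Z. dual_value K \<xi> z) \<le> MILP_value N xs M r1 r2 r3 p h Z K \<xi>"
    using dual_value_le_MILP_value assms by (blast intro: SUP_least)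
qed

end

theorem proposition8:
  fixes N M K :: nat and xs :: "nat \<Rightarrow> real"
    and r1 r2 r3 p h :: "nat \<Rightarrow> real"
    and Z :: "'a::euclidean_space set" and \<xi> :: "nat \<Rightarrow> 'a"
  assumes "N \<ge> 3"
    and "\<And>i. 1 \<le> i \<Longrightarrow> i < N \<Longrightarrow> xs i < xs (Suc i)"
    and "M \<ge> 1" and "K \<ge> 1"
    and "\<And>m. m \<in> {1..M} \<Longrightarrow> r1 m \<le> r3 m"
    and "\<And>m. m \<in> {1..M} \<Longrightarrow> r1 m \<in> {xs 1..xs N} \<and> r2 m \<in> {xs 1..xs N} \<and> r3 m \<in> {xs 1..xs N}"
    and "\<And>m. m \<in> {1..M} \<Longrightarrow> p m \<in> {0..1}"
    and "\<And>m. m \<in> {1..M} \<Longrightarrow> h m \<in> {-1, 1}"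
    and "compact Z" and "convex Z"
    and "\<And>z k. z \<in> Z \<Longrightarrow> k \<in> {1..K} \<Longrightarrow> z \<bullet> \<xi> k \<in> {xs 1..xs N}"
  shows "PRO_value N xs M r1 r2 r3 p h Z K \<xi> = MILP_value N xs M r1 r2 r3 p h Z K \<xi>"
proof -
  interpret pro_instance N xs M r1 r2 r3 p h
    using assms(1,2) by unfold_locales
  show ?thesis
    using PRO_value_eq_dual MILP_value_eq_dual[OF assms(11)] by simp
qed

end
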